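(* Let $Q$ be a connected quiver with two mutable vertices $1,2$ and at least one frozen vertex, such that $Q^{\mathrm{mut}}$ is mutation-infinite (equivalently $|b_{12}|\ge2$). Let $\mathbf M$ be either of the two infinite reduced mutation sequences $1212\cdots$ or $2121\cdots$. Then there is $T$ such that $Q^{(j)}_{\mathbf M}$ is sign-coherent for all $j>T$.
   Context: A quiver is a finite directed multigraph with no loops and no oriented 2-cycles, whose vertex set is partitioned into mutable and frozen vertices; arrows between two frozen vertices are ignored. $b_{ik}$ = number of arrows $i\to k$ minus number of arrows $k\to i$; $Q^{\mathrm{mut}}$ is the subquiver on the mutable vertices. Mutation $\mu_j$ at mutable $j$: for each path $i\to j\to k$ add $b_{ij}b_{jk}$ arrows $i\to k$, reverse all arrows at $j$, cancel 2-cycles. A mutation sequence $\mathbf M=m_1m_2\cdots$ has $Q^{(0)}_{\mathbf M}=Q$, $Q^{(i)}_{\mathbf M}=\mu_{m_i}(Q^{(i-1)}_{\mathbf M})$. Mutation-infinite means mutation-equivalent to infinitely many distinct quivers. Connected: the mutable part is connected as an undirected graph and every frozen vertex is adjacent to some mutable vertex. A mutable vertex adjacent to at least one frozen vertex is red (resp. green) if all arrows between it and frozen vertices point towards (resp. away from) it; a quiver is sign-coherent if every mutable vertex is red or green. *)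

theory Defs
  imports Main
begin

text \<open>A quiver (no loops, no oriented 2-cycles) on a finite vertex set is encoded by its
  skew-symmetric exchange matrix b, where b i k = #arrows i->k minus #arrows k->i.
  Entries between two frozen vertices are ignored.\<close>

definition quiver :: "'v set \<Rightarrow> 'v set \<Rightarrow> ('v \<Rightarrow> 'v \<Rightarrow> int) \<Rightarrow> bool" where
  "quiver V M b \<longleftrightarrow> finite V \<and> M \<subseteq> V \<and>
     (\<forall>i\<in>V. \<forall>k\<in>V. (i \<in> M \<or> k \<in> M) \<longrightarrow> b i k = - b k i)"

text \<open>Mutation at j: for each path i->j->k add b_ij b_jk arrows i->k, reverse arrows at j,
  cancel 2-cycles. On exchange matrices this is the following rule.\<close>

definition mutate :: "'v \<Rightarrow> ('v \<Rightarrow> 'v \<Rightarrow> int) \<Rightarrow> ('v \<Rightarrow> 'v \<Rightarrow> int)" where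
  "mutate j b = (\<lambda>i k. if i = j \<or> k = j then - b i k
       else b i k + max (b i j) 0 * max (b j k) 0 - max (b k j) 0 * max (b j i) 0)"

text \<open>Q^(0) = Q, Q^(i) = mu_{m_i}(Q^(i-1)); the sequence is indexed m 1, m 2, ...\<close>

fun mut_seq :: "('v \<Rightarrow> 'v \<Rightarrow> int) \<Rightarrow> (nat \<Rightarrow> 'v) \<Rightarrow> nat \<Rightarrow> ('v \<Rightarrow> 'v \<Rightarrow> int)" where
  "mut_seq b m 0 = b"
| "mut_seq b m (Suc i) = mutate (m (Suc i)) (mut_seq b m i)"

definition connected_quiver :: "'v set \<Rightarrow> 'v set \<Rightarrow> ('v \<Rightarrow> 'v \<Rightarrow> int) \<Rightarrow> bool" where
  "connected_quiver V M b \<longleftrightarrow>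
     (\<forall>x\<in>M. \<forall>y\<in>M. (x, y) \<in> ({(i, k). i \<in> M \<and> k \<in> M \<and> b i k \<noteq> 0})\<^sup>*) \<and>
     (\<forall>f\<in>V - M. \<exists>k\<in>M. b f k \<noteq> 0)"

definition red_vertex :: "'v set \<Rightarrow> 'v set \<Rightarrow> ('v \<Rightarrow> 'v \<Rightarrow> int) \<Rightarrow> 'v \<Rightarrow> bool" where
  "red_vertex V M b k \<longleftrightarrow> (\<exists>f\<in>V - M. b f k \<noteq> 0) \<and> (\<forall>f\<in>V - M. b f k \<ge> 0)"

definition green_vertex :: "'v set \<Rightarrow> 'v set \<Rightarrow> ('v \<Rightarrow> 'v \<Rightarrow> int) \<Rightarrow> 'v \<Rightarrow> bool" where
  "green_vertex V M b k \<longleftrightarrow> (\<exists>f\<in>V - M. b f k \<noteq> 0) \<and> (\<forall>f\<in>V - M. b f k \<le> 0)"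

definition sign_coherent :: "'v set \<Rightarrow> 'v set \<Rightarrow> ('v \<Rightarrow> 'v \<Rightarrow> int) \<Rightarrow> bool" where
  "sign_coherent V M b \<longleftrightarrow> (\<forall>k\<in>M. red_vertex V M b k \<or> green_vertex V M b k)"

end

theory Submission
  imports Defs
begin

text \<open>Let \<open>j\<close> be the mutable vertex mutated next and \<open>k\<close> the other one. For a frozen vertex
  \<open>f\<close>, mutating at \<open>j\<close> changes \<open>(b f j, b f k)\<close> by a map depending only on \<open>\<beta> = b j k\<close>, and
  afterwards the roles of \<open>j\<close> and \<open>k\<close> are swapped while \<open>b k j = \<beta>\<close>. So along the alternating
  sequence each frozen row just iterates this map. For \<open>\<beta> \<ge> 2\<close> every nonzero row eventually
  enters the cone \<open>0 < p, q \<le> 0, 0 \<le> p + q\<close>, which is mapped into itself; from then on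
  \<open>b f j > 0 > b f k\<close> for every frozen \<open>f\<close>, i.e. \<open>j\<close> is red and \<open>k\<close> green. The case
  \<open>\<beta> \<le> -2\<close> is the mirror image under \<open>(p, q) \<mapsto> (-p, -q)\<close>.\<close>

fun row_step :: "int \<Rightarrow> int \<times> int \<Rightarrow> int \<times> int" where
  "row_step \<beta> (p, q) = (q + max p 0 * max \<beta> 0 - max (-\<beta>) 0 * max (-p) 0, -p)"

definition cone :: "(int \<times> int) set" where
  "cone = {(p, q). 0 < p \<and> q \<le> 0 \<and> 0 \<le> p + q}"

lemma row_step_uminus:
  "row_step (-\<beta>) (map_prod uminus uminus s) = map_prod uminus uminus (row_step \<beta> s)"
  by (cases s) simp

lemma funpow_row_step_uminus:
  "(row_step (-\<beta>) ^^ n) (map_prod uminus uminus s) = map_prod uminus uminus ((row_step \<beta> ^^ n) s)"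
  by (induction n) (simp_all add: row_step_uminus)

lemma row_step_in_cone:
  assumes "2 \<le> \<beta>" "0 < p" "0 \<le> p + q"
  shows "row_step \<beta> (p, q) \<in> cone"
proof -
  have "p * 2 \<le> p * \<beta>" using mult_left_mono[OF assms(1)] assms(2) by simp
  then have "0 < q + p * \<beta>" "p \<le> q + p * \<beta>" using assms by linarith+
  then show ?thesis using assms by (simp add: cone_def)
qed

lemma row_step_cone_into_cone:
  assumes "2 \<le> \<beta>" "s \<in> cone"
  shows "row_step \<beta> s \<in> cone"
proof -
  from assms(2) obtain p q where "s = (p, q)" "0 < p" "0 \<le> p + q" by (auto simp: cone_def)
  then show ?thesis using row_step_in_cone[OF assms(1)] by simp
qed

lemma funpow_row_step_cone_into_cone:
  "2 \<le> \<beta> \<Longrightarrow> s \<in> cone \<Longrightarrow> (row_step \<beta> ^^ n) s \<in> cone"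
  by (induction n) (simp_all add: row_step_cone_into_cone)

lemma row_step_nonneg_quadrant_into_cone:
  assumes "2 \<le> \<beta>" "0 \<le> p" "0 \<le> q" "(p, q) \<noteq> (0, 0)"
  shows "row_step \<beta> (p, q) \<in> cone"
proof (cases "p = 0")
  case True
  then show ?thesis using assms by (simp add: cone_def)
next
  case False
  then show ?thesis using assms by (intro row_step_in_cone) auto
qed

definition reaches_cone :: "int \<Rightarrow> int \<times> int \<Rightarrow> bool" where
  "reaches_cone \<beta> s \<longleftrightarrow> (\<exists>n. (row_step \<beta> ^^ n) s \<in> cone)"

lemma reaches_cone_if_in_cone: "s \<in> cone \<Longrightarrow> reaches_cone \<beta> s"
  unfolding reaches_cone_def by (metis funpow_0)

lemma reaches_cone_if_row_step_reaches: "reaches_cone \<beta> (row_step \<beta> s) \<Longrightarrow> reaches_cone \<beta> s"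
  unfolding reaches_cone_def by (metis funpow_Suc_right o_apply)

lemma reaches_cone_if_row_step_in_cone: "row_step \<beta> s \<in> cone \<Longrightarrow> reaches_cone \<beta> s"
  by (rule reaches_cone_if_row_step_reaches[OF reaches_cone_if_in_cone])

lemma nonpos_reaches_cone:
  assumes "2 \<le> \<beta>" "p \<le> 0" "(p, q) \<noteq> (0, 0)"
  shows "reaches_cone \<beta> (p, q)"
proof -
  have first: "row_step \<beta> (p, q) = (q, -p)" using assms by simp
  have "reaches_cone \<beta> (q, -p)"
  proof (cases "0 \<le> q")
    case True
    then have "row_step \<beta> (q, -p) \<in> cone"
      using assms by (intro row_step_nonneg_quadrant_into_cone) auto
    then show ?thesis by (rule reaches_cone_if_row_step_in_cone)
  next
    case False
    then have second: "row_step \<beta> (q, -p) = (-p, -q)" using assms by simp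
    have "row_step \<beta> (-p, -q) \<in> cone"
      using assms False by (intro row_step_nonneg_quadrant_into_cone) auto
    then have "reaches_cone \<beta> (row_step \<beta> (q, -p))"
      unfolding second by (rule reaches_cone_if_row_step_in_cone)
    then show ?thesis by (rule reaches_cone_if_row_step_reaches)
  qed
  then have "reaches_cone \<beta> (row_step \<beta> (p, q))" unfolding first .
  then show ?thesis by (rule reaches_cone_if_row_step_reaches)
qed

text \<open>Below the cone, one step either lands in the cone or strictly decreases \<open>p\<close>.\<close>

lemma reaches_cone_if_nonzero:
  assumes "2 \<le> \<beta>" "s \<noteq> (0, 0)"
  shows "reaches_cone \<beta> s"
proof -
  have "reaches_cone \<beta> (p, q)" if "(p, q) \<noteq> (0, 0)" for p q
    using that
  proof (induction "nat p" arbitrary: p q rule: less_induct)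
    case less
    consider "p \<le> 0" | "0 < p" "0 \<le> p + q" | "0 < p" "p + q < 0" by linarith
    then show ?case
    proof cases
      case 1
      then show ?thesis using assms(1) less.prems by (intro nonpos_reaches_cone)
    next
      case 2
      then have "row_step \<beta> (p, q) \<in> cone" using assms(1) by (intro row_step_in_cone)
      then show ?thesis by (rule reaches_cone_if_row_step_in_cone)
    next
      case 3
      define p' where "p' = q + \<beta> * p"
      have step: "row_step \<beta> (p, q) = (p', -p)" using 3 assms(1) by (simp add: p'_def)
      show ?thesis
      proof (cases "p' < p")
        case True
        then have "reaches_cone \<beta> (p', -p)" using less.hyps[of p' "-p"] 3 by auto
        then have "reaches_cone \<beta> (row_step \<beta> (p, q))" unfolding step .
        then show ?thesis by (rule reaches_cone_if_row_step_reaches)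
      next
        case False
        then have "row_step \<beta> (p, q) \<in> cone" unfolding step cone_def using 3 by simp
        then show ?thesis by (rule reaches_cone_if_row_step_in_cone)
      qed
    qed
  qed
  then show ?thesis using assms(2) by (cases s) blast
qed

lemma row_step_eventually_sign_pattern_pos:
  assumes "2 \<le> \<beta>" "s \<noteq> (0, 0)"
  shows "\<forall>\<^sub>F n in sequentially. 0 < fst ((row_step \<beta> ^^ n) s) \<and> snd ((row_step \<beta> ^^ n) s) < 0"
proof -
  obtain n0 where n0: "(row_step \<beta> ^^ n0) s \<in> cone"
    using reaches_cone_if_nonzero[OF assms] unfolding reaches_cone_def by blast
  have in_cone: "(row_step \<beta> ^^ n) s \<in> cone" if "n0 \<le> n" for n
  proof -
    obtain k where "n = k + n0" using \<open>n0 \<le> n\<close> le_iff_add add.commute by metis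
    then show ?thesis using funpow_row_step_cone_into_cone[OF assms(1) n0] by (simp add: funpow_add)
  qed
  have signs: "0 < fst ((row_step \<beta> ^^ Suc n) s) \<and> snd ((row_step \<beta> ^^ Suc n) s) < 0"
    if "n0 \<le> n" for n
  proof -
    from in_cone[OF that] obtain p q where pq: "(row_step \<beta> ^^ n) s = (p, q)" "0 < p"
      by (auto simp: cone_def)
    have "snd ((row_step \<beta> ^^ Suc n) s) = -p" using pq by simp
    moreover have "0 < fst ((row_step \<beta> ^^ Suc n) s)"
      using in_cone[of "Suc n"] that by (auto simp: cone_def)
    ultimately show ?thesis using pq by simp
  qed
  show ?thesis
    unfolding eventually_sequentially
  proof (intro exI allI impI)
    fix n assume "Suc n0 \<le> n"
    then obtain k where "n = Suc k" "n0 \<le> k" by (cases n) auto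
    then show "0 < fst ((row_step \<beta> ^^ n) s) \<and> snd ((row_step \<beta> ^^ n) s) < 0"
      using signs by blast
  qed
qed

lemma row_step_eventually_sign_pattern:
  assumes "2 \<le> \<bar>\<beta>\<bar>" "s \<noteq> (0, 0)"
  shows "\<forall>\<^sub>F n in sequentially.
    0 < \<beta> * fst ((row_step \<beta> ^^ n) s) \<and> \<beta> * snd ((row_step \<beta> ^^ n) s) < 0"
proof (cases "0 < \<beta>")
  case True
  then show ?thesis
    using row_step_eventually_sign_pattern_pos[of \<beta> s] assms
    by (auto elim!: eventually_mono simp: zero_less_mult_iff mult_less_0_iff)
next
  case False
  then have neg: "\<beta> < 0" using assms(1) by simp
  have "2 \<le> -\<beta>" "map_prod uminus uminus s \<noteq> (0, 0)"
    using assms False by (cases s; auto)+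
  from row_step_eventually_sign_pattern_pos[OF this] neg show ?thesis
    by (auto elim!: eventually_mono simp: funpow_row_step_uminus
        zero_less_mult_iff mult_less_0_iff)
qed

lemma quiver_skew: "quiver V M b \<Longrightarrow> j \<in> M \<Longrightarrow> i \<in> V \<Longrightarrow> b i j = - b j i"
  unfolding quiver_def by blast

lemma mutate_skew: "b i k = - b k i \<Longrightarrow> mutate j b i k = - mutate j b k i"
  by (simp add: mutate_def)

lemma quiver_mutate: "quiver V M b \<Longrightarrow> quiver V M (mutate j b)"
  unfolding quiver_def by (blast intro: mutate_skew)

lemma quiver_mut_seq: "quiver V M b \<Longrightarrow> quiver V M (mut_seq b m n)"
  by (induction n) (simp_all add: quiver_mutate)

lemma mutate_exchange: "b k j = - b j k \<Longrightarrow> mutate j b k j = b j k"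
  by (simp add: mutate_def)

lemma mutate_frozen_row:
  assumes "f \<noteq> j" "f \<noteq> k" "j \<noteq> k" "b k j = - b j k" "b j f = - b f j"
  shows "(mutate j b f k, mutate j b f j) = row_step (b j k) (b f j, b f k)"
  using assms by (simp add: mutate_def)

lemma sign_coherent_if_uniform_signs:
  assumes "V - M \<noteq> {}" "\<forall>k\<in>M. \<exists>c. \<forall>f\<in>V - M. 0 < c * b f k"
  shows "sign_coherent V M b"
  unfolding sign_coherent_def
proof
  fix k assume "k \<in> M"
  then obtain c where c: "\<forall>f\<in>V - M. 0 < c * b f k" using assms(2) by blast
  obtain f0 where f0: "f0 \<in> V - M" using assms(1) by blast
  have "(\<forall>f\<in>V - M. 0 < b f k) \<or> (\<forall>f\<in>V - M. b f k < 0)"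
    using c by (cases "0 < c") (auto simp: zero_less_mult_iff)
  then show "red_vertex V M b k \<or> green_vertex V M b k"
    unfolding red_vertex_def green_vertex_def using f0 by (elim disjE) force+
qed

context
  fixes V M :: "'v set" and b :: "'v \<Rightarrow> 'v \<Rightarrow> int" and m :: "nat \<Rightarrow> 'v"
  assumes quiver: "quiver V M b"
    and mutable: "M = {m 1, m 0}"
    and alternating: "m 1 \<noteq> m 0"
    and period_two: "\<And>n. m (Suc (Suc n)) = m n"
begin

lemma period_two_mutable: "M = {m (Suc n), m n}"
  by (induction n) (simp_all add: mutable period_two insert_commute)

lemma period_two_distinct: "m (Suc n) \<noteq> m n"
  using alternating by (induction n) (simp_all add: period_two)

lemma period_two_skew: "i \<in> V \<Longrightarrow> k \<in> M \<Longrightarrow> mut_seq b m n i k = - mut_seq b m n k i"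
  using quiver_skew[OF quiver_mut_seq[OF quiver]] by simp

lemma period_two_mutable_in_V: "m n \<in> V"
  using quiver period_two_mutable[of n] by (auto simp: quiver_def)

lemma period_two_exchange: "mut_seq b m n (m (Suc n)) (m n) = b (m 1) (m 0)"
proof (induction n)
  case 0
  show ?case by simp
next
  case (Suc n)
  have "m n \<in> M" using period_two_mutable[of n] by auto
  then have "mutate (m (Suc n)) (mut_seq b m n) (m n) (m (Suc n)) = mut_seq b m n (m (Suc n)) (m n)"
    using period_two_skew[of "m (Suc n)" "m n" n] period_two_mutable_in_V
    by (intro mutate_exchange) auto
  then show ?case using Suc.IH by (simp add: period_two)
qed

lemma period_two_frozen_row:
  assumes f: "f \<in> V - M"
  shows "(mut_seq b m n f (m (Suc n)), mut_seq b m n f (m n))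
    = (row_step (b (m 1) (m 0)) ^^ n) (b f (m 1), b f (m 0))"
proof (induction n)
  case 0
  show ?case by simp
next
  case (Suc n)
  let ?B = "mut_seq b m n" and ?j = "m (Suc n)" and ?k = "m n"
  have "(mut_seq b m (Suc n) f (m (Suc (Suc n))), mut_seq b m (Suc n) f ?j)
      = (mutate ?j ?B f ?k, mutate ?j ?B f ?j)"
    by (simp add: period_two)
  also have "\<dots> = row_step (?B ?j ?k) (?B f ?j, ?B f ?k)"
  proof (rule mutate_frozen_row)
    show "f \<noteq> ?j" "f \<noteq> ?k" using f period_two_mutable[of n] by auto
    show "?j \<noteq> ?k" by (rule period_two_distinct)
    have "?j \<in> M" using period_two_mutable[of n] by auto
    then show "?B ?k ?j = - ?B ?j ?k" "?B ?j f = - ?B f ?j"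
      using period_two_skew period_two_mutable_in_V f by auto
  qed
  finally show ?case by (simp only: period_two_exchange Suc.IH funpow.simps comp_apply)
qed

lemma period_two_eventually_sign_coherent:
  assumes "V - M \<noteq> {}" and adjacent: "\<forall>f\<in>V - M. \<exists>k\<in>M. b f k \<noteq> 0"
    and "2 \<le> \<bar>b (m 1) (m 0)\<bar>"
  shows "\<forall>\<^sub>F n in sequentially. sign_coherent V M (mut_seq b m n)"
proof -
  define \<beta> where "\<beta> = b (m 1) (m 0)"
  have "finite (V - M)" using quiver by (simp add: quiver_def)
  moreover have "\<forall>\<^sub>F n in sequentially.
      0 < \<beta> * mut_seq b m n f (m (Suc n)) \<and> \<beta> * mut_seq b m n f (m n) < 0"
    if f: "f \<in> V - M" for f
  proof -
    have "2 \<le> \<bar>\<beta>\<bar>" using assms(3) by (simp add: \<beta>_def)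
    moreover have "(b f (m 1), b f (m 0)) \<noteq> (0, 0)" using adjacent f mutable by auto
    ultimately have "\<forall>\<^sub>F n in sequentially.
        0 < \<beta> * fst ((row_step \<beta> ^^ n) (b f (m 1), b f (m 0)))
        \<and> \<beta> * snd ((row_step \<beta> ^^ n) (b f (m 1), b f (m 0))) < 0"
      by (rule row_step_eventually_sign_pattern)
    then show ?thesis
      by (simp only: \<beta>_def period_two_frozen_row[OF f, symmetric] fst_conv snd_conv)
  qed
  ultimately have "\<forall>\<^sub>F n in sequentially. \<forall>f\<in>V - M.
      0 < \<beta> * mut_seq b m n f (m (Suc n)) \<and> \<beta> * mut_seq b m n f (m n) < 0"
    by (intro eventually_ball_finite) auto
  then show ?thesis
  proof (rule eventually_mono)
    fix n assume signs: "\<forall>f\<in>V - M.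
      0 < \<beta> * mut_seq b m n f (m (Suc n)) \<and> \<beta> * mut_seq b m n f (m n) < 0"
    have "\<forall>k\<in>M. \<exists>c. \<forall>f\<in>V - M. 0 < c * mut_seq b m n f k"
    proof
      fix k assume "k \<in> M"
      then consider "k = m (Suc n)" | "k = m n" using period_two_mutable[of n] by blast
      then show "\<exists>c. \<forall>f\<in>V - M. 0 < c * mut_seq b m n f k"
      proof cases
        case 1
        with signs show ?thesis by (intro exI[of _ \<beta>]) simp
      next
        case 2
        with signs show ?thesis by (intro exI[of _ "-\<beta>"]) simp
      qed
    qed
    then show "sign_coherent V M (mut_seq b m n)"
      by (rule sign_coherent_if_uniform_signs[OF \<open>V - M \<noteq> {}\<close>])
  qed
qed

end

theorem mainTheorem19:
  fixes V M :: "'v set" and b :: "'v \<Rightarrow> 'v \<Rightarrow> int" and v1 v2 :: 'v and m :: "nat \<Rightarrow> 'v"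
  assumes "quiver V M b"
    and "M = {v1, v2}" and "v1 \<noteq> v2"
    and "V - M \<noteq> {}"
    and "connected_quiver V M b"
    and "\<bar>b v1 v2\<bar> \<ge> 2"
    and "m = (\<lambda>i. if odd i then v1 else v2) \<or> m = (\<lambda>i. if odd i then v2 else v1)"
  shows "\<exists>T. \<forall>j>T. sign_coherent V M (mut_seq b m j)"
proof -
  have adjacent: "\<forall>f\<in>V - M. \<exists>k\<in>M. b f k \<noteq> 0"
    using assms(5) by (simp add: connected_quiver_def)
  have "b v2 v1 = - b v1 v2" using assms(1,2) by (auto simp: quiver_def)
  then have "2 \<le> \<bar>b (m 1) (m 0)\<bar>" "M = {m 1, m 0}" "m 1 \<noteq> m 0" "m (Suc (Suc n)) = m n" for n
    using assms(2,3,6,7) by auto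
  then have "\<forall>\<^sub>F j in sequentially. sign_coherent V M (mut_seq b m j)"
    using period_two_eventually_sign_coherent[OF assms(1)] assms(4) adjacent by blast
  then show ?thesis unfolding eventually_sequentially by (meson less_imp_le)
qed

end
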